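(* Let $(\mathfrak g,\cdot,N)$ and $(\mathfrak g^*,\circ,S^* )$ be finite-dimensional Nijenhuis perm algebras (with $S:\mathfrak g\to\mathfrak g$ linear and $S^*$ its dual), and let $((\mathfrak g\oplus\mathfrak g^*,N+S^*,\mathfrak B),(\mathfrak g,N),(\mathfrak g^*,S^* ))$ be a Manin triple of NF perm algebras. Then: (1) the adjoint of $N+S^*$ with respect to $\mathfrak B$ is $S+N^*$, and $S+N^*$ is admissible to the Nijenhuis perm algebra $(\mathfrak g\oplus\mathfrak g^*,N+S^* )$; (2) $S$ is admissible to $(\mathfrak g,N)$; (3) $N^*$ is admissible to $(\mathfrak g^*,S^* )$.
   Context: Over a field $K$. A (right) perm algebra: bilinear product with $(xy)z=x(yz)=x(zy)$. A Nijenhuis operator $N$ on a perm algebra: $N(x)N(y)+N^2(xy)=N(N(x)y)+N(xN(y))$. A bilinear form $\mathfrak B$ is invariant if $\mathfrak B(xy,z)=\mathfrak B(y,zx)-\mathfrak B(y,xz)$. An NF perm algebra is a triple $(A,N,\mathfrak B)$ with $(A,N)$ a Nijenhuis perm algebra and $\mathfrak B$ a nondegenerate invariant bilinear form; the adjoint $\widehat N$ of $N$ is defined by $\mathfrak B(N(x),y)=\mathfrak B(x,\widehat N(y))$. A Manin triple of Frobenius perm algebra associated to $(\mathfrak g,\cdot)$ and $(\mathfrak g^*,\circ)$ is a perm algebra structure on $\mathfrak g\oplus\mathfrak g^*$ containing $(\mathfrak g,\cdot)$ and $(\mathfrak g^*,\circ)$ as subalgebras for which the form $\mathfrak B(x+a,y+b)=\langle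 x,b\rangle-\langle y,a\rangle$ ($x,y\in\mathfrak g$, $a,b\in\mathfrak g^*$) is invariant. A Manin triple of NF perm algebra $((\mathfrak g\oplus\mathfrak g^*,N+S^*,\mathfrak B),(\mathfrak g,N),(\mathfrak g^*,S^* ))$ is such a Manin triple for which $(\mathfrak g\oplus\mathfrak g^*,N+S^*,\mathfrak B)$ is an NF perm algebra, where $(N+S^* )(x+a)=N(x)+S^*(a)$; similarly $(S+N^* )(x+a)=S(x)+N^*(a)$ with $N^*$ the dual of $N$. A linear map $S$ on a Nijenhuis perm algebra $(A,N)$ is admissible to $(A,N)$ if for all $x,y\in A$: $S(N(x)y)+xS^2(y)-N(x)S(y)-S(xS(y))=0$ and $S(xN(y))+S^2(x)y-S(x)N(y)-S(S(x)y)=0$. *)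

theory Defs
  imports Main "HOL-Library.Function_Algebras" "HOL-Library.Product_Plus"
begin

text \<open>The finite-dimensional space g is modelled as 'n => 'k ('n a finite index type,
 'k a field), its dual g* as another copy of 'n => 'k with the standard pairing
 <x,a> = sum_i x i * a i, and g (+) g* as the product type.\<close>

type_synonym ('n,'k) vsp = "'n \<Rightarrow> 'k"

definition sc :: "'k::field \<Rightarrow> ('n,'k) vsp \<Rightarrow> ('n,'k) vsp" where
  "sc c x = (\<lambda>i. c * x i)"

definition scd :: "'k::field \<Rightarrow> ('n,'k) vsp \<times> ('n,'k) vsp \<Rightarrow> ('n,'k) vsp \<times> ('n,'k) vsp" where
  "scd c p = (sc c (fst p), sc c (snd p))"

definition linear_map :: "('k \<Rightarrow> 'v::plus \<Rightarrow> 'v) \<Rightarrow> ('v \<Rightarrow> 'v) \<Rightarrow> bool" where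
  "linear_map s f \<longleftrightarrow> (\<forall>x y. f (x + y) = f x + f y) \<and> (\<forall>c x. f (s c x) = s c (f x))"

definition bilinear_prod :: "('k \<Rightarrow> 'v::plus \<Rightarrow> 'v) \<Rightarrow> ('v \<Rightarrow> 'v \<Rightarrow> 'v) \<Rightarrow> bool" where
  "bilinear_prod s m \<longleftrightarrow> (\<forall>y. linear_map s (\<lambda>x. m x y)) \<and> (\<forall>x. linear_map s (\<lambda>y. m x y))"

definition bilinear_form :: "('k::comm_ring \<Rightarrow> 'v::plus \<Rightarrow> 'v) \<Rightarrow> ('v \<Rightarrow> 'v \<Rightarrow> 'k) \<Rightarrow> bool" where
  "bilinear_form s B \<longleftrightarrow>
     (\<forall>x x' y. B (x + x') y = B x y + B x' y) \<and> (\<forall>c x y. B (s c x) y = c * B x y) \<and>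
     (\<forall>x y y'. B x (y + y') = B x y + B x y') \<and> (\<forall>c x y. B x (s c y) = c * B x y)"

definition perm_algebra :: "('k \<Rightarrow> 'v::plus \<Rightarrow> 'v) \<Rightarrow> ('v \<Rightarrow> 'v \<Rightarrow> 'v) \<Rightarrow> bool" where
  "perm_algebra s m \<longleftrightarrow> bilinear_prod s m \<and>
     (\<forall>x y z. m (m x y) z = m x (m y z) \<and> m x (m y z) = m x (m z y))"

definition nijenhuis_perm :: "('k \<Rightarrow> 'v::plus \<Rightarrow> 'v) \<Rightarrow> ('v \<Rightarrow> 'v \<Rightarrow> 'v) \<Rightarrow> ('v \<Rightarrow> 'v) \<Rightarrow> bool" where
  "nijenhuis_perm s m N \<longleftrightarrow> perm_algebra s m \<and> linear_map s N \<and>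
     (\<forall>x y. m (N x) (N y) + N (N (m x y)) = N (m (N x) y) + N (m x (N y)))"

definition invariant_form :: "('k::comm_ring \<Rightarrow> 'v::plus \<Rightarrow> 'v) \<Rightarrow> ('v \<Rightarrow> 'v \<Rightarrow> 'v) \<Rightarrow> ('v \<Rightarrow> 'v \<Rightarrow> 'k) \<Rightarrow> bool" where
  "invariant_form s m B \<longleftrightarrow> bilinear_form s B \<and>
     (\<forall>x y z. B (m x y) z = B y (m z x) - B y (m x z))"

definition nondegenerate :: "('v::zero \<Rightarrow> 'v \<Rightarrow> 'k::zero) \<Rightarrow> bool" where
  "nondegenerate B \<longleftrightarrow> (\<forall>x. (\<forall>y. B x y = 0) \<longrightarrow> x = 0) \<and> (\<forall>y. (\<forall>x. B x y = 0) \<longrightarrow> y = 0)"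

definition NF_perm :: "('k::comm_ring \<Rightarrow> 'v::{plus,zero} \<Rightarrow> 'v) \<Rightarrow> ('v \<Rightarrow> 'v \<Rightarrow> 'v) \<Rightarrow> ('v \<Rightarrow> 'v) \<Rightarrow> ('v \<Rightarrow> 'v \<Rightarrow> 'k) \<Rightarrow> bool" where
  "NF_perm s m N B \<longleftrightarrow> nijenhuis_perm s m N \<and> invariant_form s m B \<and> nondegenerate B"

definition is_adjoint :: "('v \<Rightarrow> 'v \<Rightarrow> 'k) \<Rightarrow> ('v \<Rightarrow> 'v) \<Rightarrow> ('v \<Rightarrow> 'v) \<Rightarrow> bool" where
  "is_adjoint B N Nh \<longleftrightarrow> (\<forall>x y. B (N x) y = B x (Nh y))"

definition admissible :: "('k \<Rightarrow> 'v::{plus,minus,zero} \<Rightarrow> 'v) \<Rightarrow> ('v \<Rightarrow> 'v \<Rightarrow> 'v) \<Rightarrow> ('v \<Rightarrow> 'v) \<Rightarrow> ('v \<Rightarrow> 'v) \<Rightarrow> bool" where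
  "admissible s m N S \<longleftrightarrow> nijenhuis_perm s m N \<and> linear_map s S \<and>
     (\<forall>x y. S (m (N x) y) + m x (S (S y)) - m (N x) (S y) - S (m x (S y)) = 0) \<and>
     (\<forall>x y. S (m x (N y)) + m (S (S x)) y - m (S x) (N y) - S (m (S x) y) = 0)"

definition pairing :: "('n::finite,'k::field) vsp \<Rightarrow> ('n,'k) vsp \<Rightarrow> 'k" where
  "pairing x a = (\<Sum>i\<in>UNIV. x i * a i)"

definition unitv :: "'n \<Rightarrow> ('n,'k::field) vsp" where
  "unitv j = (\<lambda>i. if i = j then 1 else 0)"

text \<open>Dual map f*: g* -> g*, characterised by <f x, a> = <x, f* a>.\<close>
definition dual_map :: "(('n::finite,'k::field) vsp \<Rightarrow> ('n,'k) vsp) \<Rightarrow> ('n,'k) vsp \<Rightarrow> ('n,'k) vsp" where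
  "dual_map f a = (\<lambda>j. \<Sum>i\<in>UNIV. a i * f (unitv j) i)"

definition BB :: "('n::finite,'k::field) vsp \<times> ('n,'k) vsp \<Rightarrow> ('n,'k) vsp \<times> ('n,'k) vsp \<Rightarrow> 'k" where
  "BB p q = pairing (fst p) (snd q) - pairing (fst q) (snd p)"

definition sumop :: "('a \<Rightarrow> 'a) \<Rightarrow> ('b \<Rightarrow> 'b) \<Rightarrow> 'a \<times> 'b \<Rightarrow> 'a \<times> 'b" where
  "sumop T1 T2 p = (T1 (fst p), T2 (snd p))"

definition manin_triple_frob ::
  "(('n::finite,'k::field) vsp \<Rightarrow> ('n,'k) vsp \<Rightarrow> ('n,'k) vsp) \<Rightarrow> (('n,'k) vsp \<Rightarrow> ('n,'k) vsp \<Rightarrow> ('n,'k) vsp)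
   \<Rightarrow> (('n,'k) vsp \<times> ('n,'k) vsp \<Rightarrow> ('n,'k) vsp \<times> ('n,'k) vsp \<Rightarrow> ('n,'k) vsp \<times> ('n,'k) vsp) \<Rightarrow> bool" where
  "manin_triple_frob mul circ mD \<longleftrightarrow>
     perm_algebra sc mul \<and> perm_algebra sc circ \<and> perm_algebra scd mD \<and>
     (\<forall>x y. mD (x, 0) (y, 0) = (mul x y, 0)) \<and>
     (\<forall>a b. mD (0, a) (0, b) = (0, circ a b)) \<and>
     invariant_form scd mD BB"

definition manin_triple_NF where
  "manin_triple_NF mul N circ Sd mD \<longleftrightarrow>
     manin_triple_frob mul circ mD \<and> nijenhuis_perm sc mul N \<and> nijenhuis_perm sc circ Sd \<and>
     NF_perm scd mD (sumop N Sd) BB"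

end

theory Submission
  imports Defs
begin

text \<open>The adjoint Nh of N with respect to a skew-symmetric nondegenerate invariant form is
 admissible: pairing either admissibility expression with an arbitrary w and moving every
 operator and product across the form (via adjointness and invariance) turns it into the
 pairing of a Nijenhuis defect of N, which vanishes.
 On g (+) g* the adjoint of N + S* with respect to the canonical skew form is S + N*, and
 restricting the resulting identities to the subalgebras g and g* gives (2) and (3).\<close>

lemma linear_map_zero:
  assumes "linear_map s f"
  shows "f 0 = (0::'v::ab_group_add)"
proof -
  have "f 0 = f 0 + f 0"
    by (metis add_0 assms linear_map_def)
  then show ?thesis by simp
qed

lemma linear_map_sum:
  fixes f :: "'v::ab_group_add \<Rightarrow> 'v"
  assumes lin: "linear_map s f" and "finite A"
  shows "f (sum g A) = (\<Sum>j\<in>A. f (g j))"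
  using \<open>finite A\<close>
proof (induction A rule: finite_induct)
  case empty
  show ?case using linear_map_zero[OF lin] by simp
next
  case (insert a A)
  then show ?case using lin by (simp add: linear_map_def)
qed

lemma sum_fun_apply: "finite A \<Longrightarrow> (sum g A) i = (\<Sum>j\<in>A. g j i)"
  by (induction A rule: finite_induct) auto

lemma vsp_unitv_expansion: "x = (\<Sum>j\<in>UNIV. sc (x j) (unitv j :: ('n::finite,'k::field) vsp))"
  by (rule ext) (simp add: sum_fun_apply sc_def unitv_def if_distrib eq_commute cong: if_cong)

lemma pairing_dual_map:
  fixes f :: "('n::finite,'k::field) vsp \<Rightarrow> ('n,'k) vsp"
  assumes lin: "linear_map sc f"
  shows "pairing (f x) a = pairing x (dual_map f a)"
proof -
  have "f x = (\<Sum>j\<in>UNIV. sc (x j) (f (unitv j)))"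
    using linear_map_sum[OF lin] lin vsp_unitv_expansion[of x]
    by (metis (no_types, lifting) finite linear_map_def sum.cong)
  then have "f x i = (\<Sum>j\<in>UNIV. x j * f (unitv j) i)" for i
    by (simp add: sum_fun_apply sc_def)
  then show ?thesis
    unfolding pairing_def dual_map_def
    by (simp add: sum_distrib_left sum_distrib_right mult_ac) (rule sum.swap)
qed

lemma linear_map_dual_map: "linear_map sc (dual_map (f :: ('n::finite,'k::field) vsp \<Rightarrow> ('n,'k) vsp))"
  unfolding linear_map_def dual_map_def sc_def
  by (auto simp: sum.distrib distrib_right sum_distrib_left mult.assoc fun_eq_iff)

lemma is_adjoint_BB_sumop:
  assumes "linear_map sc N" "linear_map sc S"
  shows "is_adjoint BB (sumop N (dual_map S)) (sumop S (dual_map N))"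
  unfolding is_adjoint_def BB_def sumop_def
  by (simp add: pairing_dual_map[OF assms(1)] pairing_dual_map[OF assms(2)])

lemma BB_skew: "BB p q = - BB q p"
  by (simp add: BB_def)

lemma bilinear_form_diff_right:
  fixes B :: "'v::ab_group_add \<Rightarrow> 'v \<Rightarrow> 'k::comm_ring"
  assumes "bilinear_form s B"
  shows "B w (a - b) = B w a - B w b"
  using assms unfolding bilinear_form_def by (metis add_diff_cancel diff_add_cancel)

lemma nondegenerate_eq_right:
  fixes B :: "'v::ab_group_add \<Rightarrow> 'v \<Rightarrow> 'k::comm_ring"
  assumes "bilinear_form s B" "nondegenerate B" "\<And>w. B w a = B w b"
  shows "a = b"
proof -
  have "\<forall>w. B w (a - b) = 0"
    using assms(3) by (simp add: bilinear_form_diff_right[OF assms(1)])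
  then show ?thesis
    using assms(2) unfolding nondegenerate_def by (metis eq_iff_diff_eq_0)
qed

lemma is_adjoint_linear_map:
  fixes B :: "'v::ab_group_add \<Rightarrow> 'v \<Rightarrow> 'k::comm_ring"
  assumes B_bilinear: "bilinear_form s B" and nd: "nondegenerate B" and adj: "is_adjoint B N Nh"
  shows "linear_map s Nh"
  unfolding linear_map_def
proof (intro conjI allI)
  have B_Nh: "B w (Nh y) = B (N w) y" for w y
    using adj by (simp add: is_adjoint_def)
  show "Nh (x + y) = Nh x + Nh y" for x y
    by (rule nondegenerate_eq_right[OF B_bilinear nd]) (use B_bilinear in \<open>simp add: B_Nh bilinear_form_def\<close>)
  show "Nh (s c x) = s c (Nh x)" for c x
    by (rule nondegenerate_eq_right[OF B_bilinear nd]) (use B_bilinear in \<open>simp add: B_Nh bilinear_form_def\<close>)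
qed

context
  fixes s :: "'k::comm_ring \<Rightarrow> 'v::ab_group_add \<Rightarrow> 'v" and m :: "'v \<Rightarrow> 'v \<Rightarrow> 'v"
    and N Nh :: "'v \<Rightarrow> 'v" and B :: "'v \<Rightarrow> 'v \<Rightarrow> 'k"
  assumes NF: "NF_perm s m N B"
    and skew: "\<And>x y. B x y = - B y x"
    and adj: "is_adjoint B N Nh"
begin

private lemma B_bilinear: "bilinear_form s B"
  using NF by (simp add: NF_perm_def invariant_form_def)

private lemma B_add_right: "B x (y + z) = B x y + B x z"
  using B_bilinear by (simp add: bilinear_form_def)

private lemma B_diff_right: "B x (y - z) = B x y - B x z"
  by (rule bilinear_form_diff_right[OF B_bilinear])

private lemma B_zero_right: "B x 0 = 0"
  using B_diff_right[of x 0 0] by simp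

private lemma B_invariant: "B (m x y) z = B y (m z x) - B y (m x z)"
  using NF by (simp add: NF_perm_def invariant_form_def)

private lemma B_N_Nh: "B (N x) y = B x (Nh y)"
  using adj by (simp add: is_adjoint_def)

private lemma B_Nh_N: "B (Nh x) y = B x (N y)"
  by (metis B_N_Nh skew minus_minus)

private lemma B_right_mult: "B w (m p q) = B q (m p w) - B q (m w p)"
  using skew[of w "m p q"] B_invariant[of p q w] by simp

private lemma B_mult_swap: "B (m y x) z = B y (m z x)"
proof -
  have "B y (m x z) = - B (m x z) y" by (rule skew)
  also have "\<dots> = B (m y x) z - B (m x y) z"
    using B_invariant[of x z y] skew[of z "m y x"] skew[of z "m x y"] by simp
  finally show ?thesis using B_invariant[of x y z] by (simp add: algebra_simps)
qed

private lemma B_right_mult_swap: "B w (m p q) = - B p (m w q)"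
  using skew[of w "m p q"] by (simp add: B_mult_swap)

private lemma nijenhuis_defect:
  "m (N x) (N y) + N (N (m x y)) - N (m (N x) y) - N (m x (N y)) = 0"
  using NF by (simp add: NF_perm_def nijenhuis_perm_def algebra_simps)

private lemma nondegenerate_right: "(\<And>w. B w y = 0) \<Longrightarrow> y = 0"
  using NF by (simp add: NF_perm_def nondegenerate_def)

lemma adjoint_admissible_left:
  "Nh (m (N x) y) + m x (Nh (Nh y)) - m (N x) (Nh y) - Nh (m x (Nh y)) = 0"
proof (rule nondegenerate_right)
  fix w
  have "B w (Nh (m (N x) y) + m x (Nh (Nh y)) - m (N x) (Nh y) - Nh (m x (Nh y)))
      = B (N w) (m (N x) y) + B w (m x (Nh (Nh y))) - B w (m (N x) (Nh y)) - B (N w) (m x (Nh y))"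
    by (simp add: B_add_right B_diff_right B_N_Nh)
  also have "\<dots> = (B y (m (N x) (N w)) - B y (m (N w) (N x)))
        + (B (Nh (Nh y)) (m x w) - B (Nh (Nh y)) (m w x))
        - (B (Nh y) (m (N x) w) - B (Nh y) (m w (N x)))
        - (B (Nh y) (m x (N w)) - B (Nh y) (m (N w) x))"
    \<comment> \<open>\<open>B_right_mult\<close> loops as a rewrite rule, hence the explicit instances\<close>
    by (simp only: B_right_mult[of "N w" "N x" y] B_right_mult[of w x "Nh (Nh y)"]
        B_right_mult[of w "N x" "Nh y"] B_right_mult[of "N w" x "Nh y"])
  also have "\<dots> = B y ((m (N x) (N w) + N (N (m x w)) - N (m (N x) w) - N (m x (N w)))
        - (m (N w) (N x) + N (N (m w x)) - N (m (N w) x) - N (m w (N x))))"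
    by (simp add: B_Nh_N B_add_right B_diff_right algebra_simps)
  also have "\<dots> = 0"
    by (simp only: nijenhuis_defect diff_self B_zero_right)
  finally show "B w (Nh (m (N x) y) + m x (Nh (Nh y)) - m (N x) (Nh y) - Nh (m x (Nh y))) = 0" .
qed

lemma adjoint_admissible_right:
  "Nh (m x (N y)) + m (Nh (Nh x)) y - m (Nh x) (N y) - Nh (m (Nh x) y) = 0"
proof (rule nondegenerate_right)
  fix w
  have "B w (Nh (m x (N y)) + m (Nh (Nh x)) y - m (Nh x) (N y) - Nh (m (Nh x) y))
      = B (N w) (m x (N y)) + B w (m (Nh (Nh x)) y) - B w (m (Nh x) (N y)) - B (N w) (m (Nh x) y)"
    by (simp add: B_add_right B_diff_right B_N_Nh)
  also have "\<dots> = - B x (m (N w) (N y)) - B (Nh (Nh x)) (m w y)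
        + B (Nh x) (m w (N y)) + B (Nh x) (m (N w) y)"
    by (simp only: B_right_mult_swap[of "N w" x "N y"] B_right_mult_swap[of w "Nh (Nh x)" y]
        B_right_mult_swap[of w "Nh x" "N y"] B_right_mult_swap[of "N w" "Nh x" y])
      (simp add: algebra_simps)
  also have "\<dots> = - B x (m (N w) (N y) + N (N (m w y)) - N (m (N w) y) - N (m w (N y)))"
    by (simp add: B_Nh_N B_add_right B_diff_right algebra_simps)
  also have "\<dots> = 0"
    by (simp only: nijenhuis_defect B_zero_right neg_equal_0_iff_equal)
  finally show "B w (Nh (m x (N y)) + m (Nh (Nh x)) y - m (Nh x) (N y) - Nh (m (Nh x) y)) = 0" .
qed

lemma adjoint_admissible: "admissible s m N Nh"
  using NF adjoint_admissible_left adjoint_admissible_right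
    is_adjoint_linear_map[OF B_bilinear _ adj]
  by (simp add: admissible_def NF_perm_def)

end

lemma admissibleD:
  assumes "admissible s m N S"
  shows "S (m (N x) y) + m x (S (S y)) - m (N x) (S y) - S (m x (S y)) = 0"
    and "S (m x (N y)) + m (S (S x)) y - m (S x) (N y) - S (m (S x) y) = 0"
  using assms by (simp_all add: admissible_def)

lemma admissible_restrict_fst:
  fixes mul :: "('n::finite,'k::field) vsp \<Rightarrow> ('n,'k) vsp \<Rightarrow> ('n,'k) vsp"
  assumes adm: "admissible scd mD (sumop N Sd) (sumop S Nd)"
    and sub: "\<And>x y. mD (x, 0) (y, 0) = (mul x y, 0)"
    and nij: "nijenhuis_perm sc mul N" and lin: "linear_map sc S" "linear_map sc Sd" "linear_map sc Nd"
  shows "admissible sc mul N S"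
  unfolding admissible_def
proof (intro conjI allI)
  note zero = linear_map_zero[OF lin(2)] linear_map_zero[OF lin(3)]
  fix x y
  show "S (mul (N x) y) + mul x (S (S y)) - mul (N x) (S y) - S (mul x (S y)) = 0"
    using arg_cong[where f=fst, OF admissibleD(1)[OF adm, of "(x, 0)" "(y, 0)"]]
    by (simp add: sumop_def sub zero)
  show "S (mul x (N y)) + mul (S (S x)) y - mul (S x) (N y) - S (mul (S x) y) = 0"
    using arg_cong[where f=fst, OF admissibleD(2)[OF adm, of "(x, 0)" "(y, 0)"]]
    by (simp add: sumop_def sub zero)
qed (use nij lin in simp_all)

lemma admissible_restrict_snd:
  fixes circ :: "('n::finite,'k::field) vsp \<Rightarrow> ('n,'k) vsp \<Rightarrow> ('n,'k) vsp"
  assumes adm: "admissible scd mD (sumop N Sd) (sumop S Nd)"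
    and sub: "\<And>a b. mD (0, a) (0, b) = (0, circ a b)"
    and nij: "nijenhuis_perm sc circ Sd" and lin: "linear_map sc Nd" "linear_map sc N" "linear_map sc S"
  shows "admissible sc circ Sd Nd"
  unfolding admissible_def
proof (intro conjI allI)
  note zero = linear_map_zero[OF lin(2)] linear_map_zero[OF lin(3)]
  fix a b
  show "Nd (circ (Sd a) b) + circ a (Nd (Nd b)) - circ (Sd a) (Nd b) - Nd (circ a (Nd b)) = 0"
    using arg_cong[where f=snd, OF admissibleD(1)[OF adm, of "(0, a)" "(0, b)"]]
    by (simp add: sumop_def sub zero)
  show "Nd (circ a (Sd b)) + circ (Nd (Nd a)) b - circ (Nd a) (Sd b) - Nd (circ (Nd a) b) = 0"
    using arg_cong[where f=snd, OF admissibleD(2)[OF adm, of "(0, a)" "(0, b)"]]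
    by (simp add: sumop_def sub zero)
qed (use nij lin in simp_all)

theorem lemma2p21:
  fixes mul circ :: "('n::finite \<Rightarrow> 'k::field) \<Rightarrow> ('n \<Rightarrow> 'k) \<Rightarrow> ('n \<Rightarrow> 'k)"
    and N S :: "('n \<Rightarrow> 'k) \<Rightarrow> ('n \<Rightarrow> 'k)"
    and mD :: "('n \<Rightarrow> 'k) \<times> ('n \<Rightarrow> 'k) \<Rightarrow> ('n \<Rightarrow> 'k) \<times> ('n \<Rightarrow> 'k) \<Rightarrow> ('n \<Rightarrow> 'k) \<times> ('n \<Rightarrow> 'k)"
  assumes "nijenhuis_perm sc mul N"
    and "linear_map sc S"
    and "nijenhuis_perm sc circ (dual_map S)"
    and "manin_triple_NF mul N circ (dual_map S) mD"
  shows "(is_adjoint BB (sumop N (dual_map S)) (sumop S (dual_map N)) \<and>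
          admissible scd mD (sumop N (dual_map S)) (sumop S (dual_map N))) \<and>
         admissible sc mul N S \<and>
         admissible sc circ (dual_map S) (dual_map N)"
proof -
  have NF: "NF_perm scd mD (sumop N (dual_map S)) BB"
    and sub_g: "\<And>x y. mD (x, 0) (y, 0) = (mul x y, 0)"
    and sub_dual: "\<And>a b. mD (0, a) (0, b) = (0, circ a b)"
    using assms(4) by (simp_all add: manin_triple_NF_def manin_triple_frob_def)
  have linN: "linear_map sc N"
    using assms(1) by (simp add: nijenhuis_perm_def)
  have adj: "is_adjoint BB (sumop N (dual_map S)) (sumop S (dual_map N))"
    by (rule is_adjoint_BB_sumop[OF linN assms(2)])
  have adm: "admissible scd mD (sumop N (dual_map S)) (sumop S (dual_map N))"
    by (rule adjoint_admissible[OF NF BB_skew adj])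
  show ?thesis
    using adj adm
      admissible_restrict_fst[OF adm sub_g assms(1,2) linear_map_dual_map linear_map_dual_map]
      admissible_restrict_snd[OF adm sub_dual assms(3) linear_map_dual_map linN assms(2)]
    by blast
qed

end
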